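(* Let $n$ be an odd positive integer and let $\mathrm{Dic}_n=\langle x,y\mid x^{2n}=1,\ y^2=x^n,\ y^{-1}xy=x^{-1}\rangle$ be the dicyclic group of order $4n$, whose irreducible complex characters are $\chi_0,\chi_1,\chi_2,\chi_3,\psi_1,\ldots,\psi_{n-1}$ as described in the context. Let $C\subset\mathrm{Dic}_n$ be a nonempty subset that is a Delsarte $T$-design for $T=T(C)$ in the conjugacy class scheme of $\mathrm{Dic}_n$. Then $\chi_2\in T$ if and only if $\chi_3\in T$; and for each $1\le \ell\le n-1$ and each integer $k$ with $-n<k<n$ and $\gcd(k,2n)=1$, $\psi_\ell\in T$ if and only if $\psi_{|k\ell\ \mathrm{MOD}\ 2n|}\in T$.
   Context: Every element of $\mathrm{Dic}_n$ is uniquely $x^k$ or $yx^k$ with $0\le k<2n$. The irreducible characters (for $n$ odd) are: $\chi_0\equiv1$; $\chi_1(x^k)=1$, $\chi_1(yx^k)=-1$; $\chi_2(x^k)=(-1)^k$, $\chi_2(yx^{k})=i$ for $k$ even and $-i$ for $k$ odd; $\chi_3=\overline{\chi_2}$; and for $1\le r\le n-1$, $\psi_r(x^k)=2\cos(\pi rk/n)$, $\psi_r(yx^k)=0$. For an irreducible character $\chi$ of a finite group $G$, the corresponding primitive idempotent of the conjugacy class association scheme is the matrix $E_\chi\in\mathrm{Mat}_G(\mathbb{C})$ with $(g,h)$-entry $\frac{\chi(1)}{|G|}\overline{\chi(g^{-1}h)}$. For a nonempty $C\subseteq G$ with $0/1$ characteristic vector $\mathbf{x}$, $T(C)$ is the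 set of irreducible characters $\chi$ with $E_\chi\mathbf{x}=0$, and $C$ is a Delsarte $T$-design if $E_\chi\mathbf{x}=0$ for all $\chi\in T$. For integers $k$ and $m>1$, $k\ \mathrm{MOD}\ m$ denotes the unique $k'\equiv k\pmod m$ with $-m/2<k'\le m/2$. *)

theory Defs
  imports Complex_Main
begin

text \<open>Elements of Dic_n: (False,k) stands for x^k, (True,k) stands for y x^k, with 0 \<le> k < 2n.\<close>

type_synonym dic = "bool \<times> int"

definition dic_elems :: "nat \<Rightarrow> dic set" where
  "dic_elems n = {(b,k). 0 \<le> k \<and> k < 2 * int n}"

text \<open>Multiplication derived from x^(2n)=1, y^2=x^n, y^(-1) x y = x^(-1) (so x^a y = y x^(-a)).\<close>
fun dic_mult :: "nat \<Rightarrow> dic \<Rightarrow> dic \<Rightarrow> dic" where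
  "dic_mult n (False, i) (False, j) = (False, (i + j) mod (2 * int n))"
| "dic_mult n (False, i) (True, j) = (True, (j - i) mod (2 * int n))"
| "dic_mult n (True, i) (False, j) = (True, (i + j) mod (2 * int n))"
| "dic_mult n (True, i) (True, j) = (False, (int n + j - i) mod (2 * int n))"

fun dic_inv :: "nat \<Rightarrow> dic \<Rightarrow> dic" where
  "dic_inv n (False, i) = (False, (- i) mod (2 * int n))"
| "dic_inv n (True, i) = (True, (i + int n) mod (2 * int n))"

datatype dchar = Chi0 | Chi1 | Chi2 | Chi3 | Psi nat

definition dic_irr :: "nat \<Rightarrow> dchar set" where
  "dic_irr n = {Chi0, Chi1, Chi2, Chi3} \<union> {Psi r | r. 1 \<le> r \<and> r \<le> n - 1}"

fun dic_char :: "nat \<Rightarrow> dchar \<Rightarrow> dic \<Rightarrow> complex" where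
  "dic_char n Chi0 g = 1"
| "dic_char n Chi1 (b, k) = (if b then -1 else 1)"
| "dic_char n Chi2 (b, k) =
     (if \<not> b then (if even k then 1 else -1) else (if even k then \<i> else - \<i>))"
| "dic_char n Chi3 (b, k) =
     (if \<not> b then (if even k then 1 else -1) else (if even k then - \<i> else \<i>))"
| "dic_char n (Psi r) (b, k) =
     (if b then 0 else complex_of_real (2 * cos (pi * real r * real_of_int k / real n)))"

definition dic_idem :: "nat \<Rightarrow> dchar \<Rightarrow> dic \<Rightarrow> dic \<Rightarrow> complex" where
  "dic_idem n \<chi> g h =
     dic_char n \<chi> (False, 0) / of_nat (card (dic_elems n))
       * cnj (dic_char n \<chi> (dic_mult n (dic_inv n g) h))"

definition idem_apply :: "nat \<Rightarrow> dchar \<Rightarrow> dic set \<Rightarrow> dic \<Rightarrow> complex" where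
  "idem_apply n \<chi> C g = (\<Sum>h\<in>dic_elems n. dic_idem n \<chi> g h * (if h \<in> C then 1 else 0))"

definition annihilates :: "nat \<Rightarrow> dchar \<Rightarrow> dic set \<Rightarrow> bool" where
  "annihilates n \<chi> C \<longleftrightarrow> (\<forall>g\<in>dic_elems n. idem_apply n \<chi> C g = 0)"

definition T_of :: "nat \<Rightarrow> dic set \<Rightarrow> dchar set" where
  "T_of n C = {\<chi> \<in> dic_irr n. annihilates n \<chi> C}"

definition delsarte_design :: "nat \<Rightarrow> dchar set \<Rightarrow> dic set \<Rightarrow> bool" where
  "delsarte_design n T C \<longleftrightarrow> (\<forall>\<chi>\<in>T. annihilates n \<chi> C)"

definition cmod :: "int \<Rightarrow> int \<Rightarrow> int" where
  "cmod k m = (THE k'. k' mod m = k mod m \<and> - m < 2 * k' \<and> 2 * k' \<le> m)"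

end

theory Submission
  imports "Berlekamp_Zassenhaus.Poly_Mod" "HOL-Number_Theory.Cong" Defs
begin

(*
  Write zeta = cis (pi / n), a primitive 2n-th root of unity. Since psi_r vanishes on the coset
  y<x> and psi_r (x^t) = zeta^(r t) + zeta^(-r t), the condition E_psi_r 1_C = 0 says that, for each
  of the two cosets, the exponents j of the elements of C in it satisfy sum_j zeta^(r j) = 0, i.e.
  the integer polynomial sum_j X^j vanishes at zeta^r.

  An integer polynomial vanishing at a d-th root of unity z also vanishes at z^k whenever k is
  prime to d. For k = p prime this is the classical argument: the minimal polynomial f of z
  divides every integer polynomial vanishing at z; if f (z^p) <> 0, then f and a prime factor g of
  X^d - 1 vanishing at z^p are coprime factors of X^d - 1, so the constant d lies in the ideal
  (f, g). Frobenius, g (X^p) = g^p mod p, gives g (z)^p in p Z[z], hence f divides d^p modulo p,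
  which is impossible for p not dividing d.

  Since zeta^|k l MOD 2n| = (zeta^l)^(+-k), psi_l and psi_|k l MOD 2n| lie in T(C) together; and
  chi_3 is the complex conjugate of chi_2, so E_chi3 1_C is the conjugate of E_chi2 1_C.
*)

section \<open>Integer polynomials modulo a prime\<close>

lemma freshmans_dream_multiple:
  fixes u v :: "'a::comm_ring_1"
  assumes "prime p"
  obtains w where "(u + v) ^ p = u ^ p + v ^ p + of_nat p * w"
proof -
  have p1: "p > 1" using assms prime_gt_1_nat by blast
  define w where "w = (\<Sum>k\<in>{1..<p}. of_nat ((p choose k) div p) * u ^ k * v ^ (p - k))"
  have choose: "of_nat (p choose k) = (of_nat p * of_nat ((p choose k) div p) :: 'a)"
    if "k \<in> {1..<p}" for k
  proof -
    have "p dvd p choose k" using that assms by (intro dvd_choose_prime) auto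
    then show ?thesis by (metis dvd_mult_div_cancel of_nat_mult)
  qed
  have "(u + v) ^ p = (\<Sum>k\<le>p. of_nat (p choose k) * u ^ k * v ^ (p - k))"
    by (rule binomial_ring)
  also have "{..p} = insert 0 (insert p {1..<p})" using p1 by auto
  also have "(\<Sum>k\<in>insert 0 (insert p {1..<p}). of_nat (p choose k) * u ^ k * v ^ (p - k))
      = v ^ p + u ^ p + (\<Sum>k\<in>{1..<p}. of_nat (p choose k) * u ^ k * v ^ (p - k))"
    using p1 by simp
  also have "(\<Sum>k\<in>{1..<p}. of_nat (p choose k) * u ^ k * v ^ (p - k)) = of_nat p * w"
    unfolding w_def sum_distrib_left by (rule sum.cong) (auto simp: choose mult.assoc)
  finally show ?thesis by (intro that) (simp add: algebra_simps)
qed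

lemma prime_dvd_power_minus_self:
  assumes "prime p"
  shows "int p dvd a ^ p - a"
proof (induction a rule: int_induct[where k = 0])
  case base
  show ?case using assms by (simp add: prime_gt_0_nat power_0_left)
next
  case (step1 i)
  obtain w where "(i + 1) ^ p = i ^ p + 1 ^ p + of_nat p * (w :: int)"
    using freshmans_dream_multiple[OF assms] .
  then have "(i + 1) ^ p - (i + 1) = (i ^ p - i) + int p * w" by (simp add: algebra_simps)
  then show ?case using step1.IH by (metis dvd_add dvd_triv_left)
next
  case (step2 i)
  obtain w where "((i - 1) + 1) ^ p = (i - 1) ^ p + 1 ^ p + of_nat p * (w :: int)"
    using freshmans_dream_multiple[OF assms] .
  then have "(i - 1) ^ p - (i - 1) = (i ^ p - i) - int p * w" by (simp add: algebra_simps)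
  then show ?case using step2.IH by (metis dvd_diff dvd_triv_left)
qed

lemma Mp_add_smult_modulus: "poly_mod.Mp m (f + smult m g) = poly_mod.Mp m f"
  by (metis add.right_neutral poly_mod.Mp_smult_m_0 poly_mod.plus_Mp(2))

lemma Mp_pcompose_monom_prime:
  assumes "prime p"
  shows "poly_mod.Mp (int p) (pcompose g (monom 1 p)) = poly_mod.Mp (int p) (g ^ p)"
proof (induction g)
  case 0
  show ?case using assms by (simp add: prime_gt_0_nat power_0_left)
next
  case (pCons a h)
  let ?Mp = "poly_mod.Mp (int p)"
  have sum_power: "?Mp ((A + B) ^ p) = ?Mp (A ^ p + B ^ p)" for A B :: "int poly"
  proof -
    obtain w where "(A + B) ^ p = A ^ p + B ^ p + of_nat p * w"
      using freshmans_dream_multiple[OF assms] .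
    then show ?thesis by (simp add: of_nat_poly Mp_add_smult_modulus)
  qed
  have const: "?Mp ([:a:] ^ p) = ?Mp [:a:]"
    using prime_dvd_power_minus_self[OF assms, of a]
    by (simp add: poly_const_pow poly_mod.Mp_const_poly mod_eq_dvd_iff)
  have "?Mp ((monom 1 1 * h) ^ p) = ?Mp (monom 1 p * ?Mp (h ^ p))"
    by (simp add: power_mult_distrib monom_power poly_mod.mult_Mp)
  also have "\<dots> = ?Mp (monom 1 p * pcompose h (monom 1 p))"
    by (metis pCons.IH poly_mod.mult_Mp(2))
  finally have shifted: "?Mp ((monom 1 1 * h) ^ p) = ?Mp (monom 1 p * pcompose h (monom 1 p))" .
  have "?Mp ((pCons a h) ^ p) = ?Mp ([:a:] ^ p + (monom 1 1 * h) ^ p)"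
    using sum_power[of "[:a:]" "monom 1 1 * h"] by (simp add: monom_Suc)
  also have "\<dots> = ?Mp ([:a:] + monom 1 p * pcompose h (monom 1 p))"
    by (metis const shifted poly_mod.plus_Mp)
  also have "\<dots> = ?Mp (pcompose (pCons a h) (monom 1 p))"
    by (simp add: pcompose_pCons)
  finally show ?case by simp
qed

lemma pcompose_monom_prime_eq:
  assumes "prime p"
  obtains s where "pcompose g (monom 1 p) = g ^ p + smult (int p) s"
proof
  let ?Dp = "poly_mod.Dp (int p)"
  have "pcompose g (monom 1 p) - smult (int p) (?Dp (pcompose g (monom 1 p)))
      = g ^ p - smult (int p) (?Dp (g ^ p))"
    using Mp_pcompose_monom_prime[OF assms, of g]
    by (metis add_diff_cancel_right' poly_mod.Dp_Mp_eq)
  then show "pcompose g (monom 1 p)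
      = g ^ p + smult (int p) (?Dp (pcompose g (monom 1 p)) - ?Dp (g ^ p))"
    by (simp add: smult_diff_right algebra_simps)
qed

section \<open>Integer polynomials vanishing at roots of unity\<close>

abbreviation ipoly :: "int poly \<Rightarrow> complex \<Rightarrow> complex" where
  "ipoly f \<equiv> poly (of_int_poly f)"

lemma ipoly_const: "ipoly [:c:] z = of_int c"
  by (cases "c = 0") (auto simp: map_poly_pCons)

lemmas ipoly_simps [simp] = of_int_poly_hom.hom_add of_int_poly_hom.hom_mult
  of_int_poly_hom.hom_minus of_int_poly_hom.hom_uminus of_int_poly_hom.hom_power
  of_int_hom.map_poly_hom_smult of_int_hom.map_poly_pcompose of_int_poly_hom.hom_sum
  poly_monom poly_pcompose poly_sum ipoly_const

lemma ipoly_prod_mset: "ipoly (prod_mset M) z = (\<Prod>f\<in>#M. ipoly f z)"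
  by (induction M) auto

lemma monic_prime_factor_vanishing:
  fixes Q :: "int poly"
  assumes "monic Q" "ipoly Q z = 0"
  obtains f where "prime f" "monic f" "f dvd Q" "ipoly f z = 0"
proof -
  let ?X = "prod_mset (prime_factorization Q)"
  have "Q \<noteq> 0" using assms(1) by auto
  moreover have "normalize Q = Q"
    using assms(1) by (simp add: normalize_poly_def unit_factor_poly_def)
  ultimately have X_eq: "?X = unit_factor ?X * Q"
    using prod_mset_prime_factorization_weak[of Q] unit_factor_mult_normalize[of ?X] by simp
  have "ipoly ?X z = ipoly (unit_factor ?X) z * ipoly Q z"
    by (subst (1) X_eq) simp
  then have "ipoly ?X z = 0" using assms(2) by simp
  then have "(\<Prod>f\<in>#prime_factorization Q. ipoly f z) = 0" by (simp add: ipoly_prod_mset)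
  then have "0 \<in># image_mset (\<lambda>f. ipoly f z) (prime_factorization Q)"
    by (simp only: prod_mset_zero_iff)
  then obtain f where f: "f \<in># prime_factorization Q" "ipoly f z = 0"
    by auto
  have "prime f" "f dvd Q"
    using f(1) by (auto intro: in_prime_factors_imp_prime in_prime_factors_imp_dvd)
  moreover have "monic f"
  proof -
    obtain t where "Q = f * t" using \<open>f dvd Q\<close> ..
    then have "lead_coeff f * lead_coeff t = 1" using assms(1) by (simp add: lead_coeff_mult)
    then have "lead_coeff f = 1 \<or> lead_coeff f = -1" by (simp add: zmult_eq_1_iff) blast
    moreover have "sgn (lead_coeff f) = 1"
      using normalize_prime[OF \<open>prime f\<close>] unit_factor_normalize[of f] \<open>prime f\<close>
      by (auto simp: unit_factor_poly_def)
    ultimately show ?thesis by auto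
  qed
  ultimately show ?thesis using f(2) that by blast
qed

lemma prime_vanishing_degree_le:
  fixes f S :: "int poly"
  assumes f: "prime f" "ipoly f z = 0" and S: "S \<noteq> 0" "ipoly S z = 0"
  shows "degree f \<le> degree S"
proof -
  obtain R where R: "R \<noteq> 0" "ipoly R z = 0"
    and least: "\<And>S. S \<noteq> 0 \<Longrightarrow> ipoly S z = 0 \<Longrightarrow> degree R \<le> degree S"
    using ex_has_least_nat[of "\<lambda>R. R \<noteq> 0 \<and> ipoly R z = 0" S degree] S by blast
  have "f \<noteq> 0" using f(1) by auto
  obtain q r where qr: "pseudo_divmod f R = (q, r)" by (cases "pseudo_divmod f R")
  define a where "a = lead_coeff R ^ (Suc (degree f) - degree R)"
  have a: "a \<noteq> 0" using R(1) unfolding a_def by simp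
  have div: "smult a f = R * q + r" and rem: "r = 0 \<or> degree r < degree R"
    using pseudo_divmod[OF R(1) qr] unfolding a_def by auto
  have "ipoly r z = 0" using arg_cong[OF div, of "\<lambda>P. ipoly P z"] f(2) R(2) by simp
  have "r = 0"
  proof (rule ccontr)
    assume "r \<noteq> 0"
    then have "degree R \<le> degree r" using least \<open>ipoly r z = 0\<close> by blast
    then show False using rem \<open>r \<noteq> 0\<close> by simp
  qed
  then have Rq: "R * q = f * [:a:]" using div by simp
  have "f dvd R * q" unfolding Rq by (rule dvd_triv_left)
  then consider "f dvd R" | "f dvd q" using f(1) prime_dvd_mult_iff by blast
  then show ?thesis
  proof cases
    case 1
    have "degree f \<le> degree R" using dvd_imp_degree_le[OF 1 R(1)] .
    also have "degree R \<le> degree S" using least[OF S] .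
    finally show ?thesis .
  next
    case 2
    then obtain q' where "q = f * q'" ..
    with Rq have "f * (R * q') = f * [:a:]" by (simp add: ac_simps)
    then have Rq': "R * q' = [:a:]" using \<open>f \<noteq> 0\<close> mult_left_cancel by blast
    then have "q' \<noteq> 0" using a by auto
    then have "degree R = 0" using arg_cong[OF Rq', of degree] R(1) by (simp add: degree_mult_eq)
    then obtain c where "R = [:c:]" by (rule degree_eq_zeroE)
    then show ?thesis using R by simp
  qed
qed

lemma prime_vanishing_dvd:
  fixes f H :: "int poly"
  assumes f: "prime f" "monic f" "ipoly f z = 0" and H: "ipoly H z = 0"
  shows "f dvd H"
proof -
  have "f \<noteq> 0" using f(1) by auto
  obtain q r where qr: "pseudo_divmod H f = (q, r)" by fastforce
  have div: "H = f * q + r" and rem: "r = 0 \<or> degree r < degree f"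
    using pseudo_divmod[OF \<open>f \<noteq> 0\<close> qr] f(2) by auto
  have "ipoly r z = 0" using arg_cong[OF div, of "\<lambda>P. ipoly P z"] f(3) H by simp
  have "r = 0"
  proof (rule ccontr)
    assume "r \<noteq> 0"
    then have "degree f \<le> degree r"
      using prime_vanishing_degree_le[OF f(1,3)] \<open>ipoly r z = 0\<close> by blast
    then show False using rem \<open>r \<noteq> 0\<close> by simp
  qed
  then show ?thesis using div by simp
qed

lemma root_of_unity_power_cong:
  fixes z :: "'a::monoid_mult"
  assumes "z ^ d = 1" "[a = b] (mod d)"
  shows "z ^ a = z ^ b"
proof -
  have reduce: "z ^ c = z ^ (c mod d)" for c
  proof -
    have "z ^ c = z ^ (d * (c div d) + c mod d)" by simp
    also have "\<dots> = (z ^ d) ^ (c div d) * z ^ (c mod d)" by (simp only: power_add power_mult)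
    finally show ?thesis using assms(1) by simp
  qed
  show ?thesis using reduce[of a] reduce[of b] assms(2) unfolding cong_def by simp
qed

lemma root_of_unity_power:
  fixes z :: "'a::monoid_mult"
  assumes "z ^ d = 1"
  shows "(z ^ k) ^ d = 1"
proof -
  have "(z ^ k) ^ d = (z ^ d) ^ k" by (simp add: power_mult [symmetric] mult.commute)
  then show ?thesis using assms by simp
qed

lemma monom_minus_one_factors_generate_const:
  fixes f g r :: "'a::idom poly"
  assumes "monom 1 d - 1 = f * g * r"
  shows "\<exists>a b. [:of_nat d:] = a * f + b * g"
proof (cases "d = 0")
  case True
  then show ?thesis by (intro exI[of _ 0]) simp
next
  case False
  let ?Q = "monom 1 d - 1 :: 'a poly"
  have "monom 1 1 * pderiv ?Q - smult (of_nat d) ?Q = [:of_nat d:]"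
    using False by (simp add: pderiv_diff pderiv_monom mult_monom smult_diff_right smult_monom)
  also have "pderiv ?Q = pderiv f * (g * r) + f * pderiv (g * r)"
    unfolding assms by (simp add: pderiv_mult ac_simps)
  finally have "[:of_nat d:] = (monom 1 1 * pderiv (g * r) - smult (of_nat d) (g * r)) * f
      + (monom 1 1 * pderiv f * r) * g"
    unfolding assms by (simp add: algebra_simps)
  then show ?thesis by blast
qed

lemma monic_dvd_const_plus_multiple:
  fixes f A :: "int poly"
  assumes "monic f" "degree f > 0" "f dvd [:c:] + smult m A"
  shows "m dvd c"
proof -
  obtain h where "[:c:] + smult m A = f * h" using assms(3) ..
  then have "[:c:] = h * f + smult m (- A)" by (simp add: algebra_simps)
  then have "poly_mod.dvdm m f [:c:]" by (intro poly_mod.div_mod_imp_dvdm) blast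
  then have "c mod m = 0" using assms(1,2) by (rule poly_mod.monic_dvdm_constant)
  then show ?thesis by (simp add: mod_eq_0_iff_dvd)
qed

lemma monic_monom_minus_one:
  assumes "d > 0"
  shows "monic (monom 1 d - 1 :: 'a::comm_ring_1 poly)"
proof -
  have "lead_coeff (- 1 + monom 1 d :: 'a poly) = 1"
    using assms by (subst lead_coeff_add_le) (auto simp: degree_monom_eq)
  then show ?thesis by simp
qed

lemma prime_factor_vanishing_at_prime_power:
  fixes z :: complex and f :: "int poly"
  assumes d: "d > 0" "z ^ d = 1" and p: "prime p" "\<not> p dvd d"
    and f: "prime f" "monic f" "f dvd monom 1 d - 1" "ipoly f z = 0"
  shows "ipoly f (z ^ p) = 0"
proof (rule ccontr)
  assume f_not_root: "ipoly f (z ^ p) \<noteq> 0"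
  note f_dvd = prime_vanishing_dvd[OF f(1,2,4)]
  have "ipoly (monom 1 d - 1) (z ^ p) = 0" using root_of_unity_power[OF d(2)] by simp
  then obtain g where g: "prime g" "g dvd monom 1 d - 1" "ipoly g (z ^ p) = 0"
    using monic_prime_factor_vanishing[OF monic_monom_minus_one[OF d(1)]] by blast
  have "f \<noteq> g" using f_not_root g(3) by auto
  then have "f * g dvd monom 1 d - 1" using f(1,3) g(1,2) by (simp add: divides_mult primes_coprime)
  then obtain r where "monom 1 d - 1 = f * g * r" ..
  then obtain a b where ab: "[:int d:] = a * f + b * g"
    using monom_minus_one_factors_generate_const by fastforce
  obtain s where s: "pcompose g (monom 1 p) = g ^ p + smult (int p) s"
    using pcompose_monom_prime_eq[OF p(1)] .
  have g_pow: "ipoly g z ^ p = - of_nat p * ipoly s z"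
    using arg_cong[OF s, of "\<lambda>P. ipoly P z"] g(3) by (simp add: eq_neg_iff_add_eq_0)
  have "of_nat d = ipoly b z * ipoly g z"
    using arg_cong[OF ab, of "\<lambda>P. ipoly P z"] f(4) by simp
  then have "of_nat d ^ p = - of_nat p * ipoly b z ^ p * ipoly s z"
    by (simp add: power_mult_distrib g_pow)
  then have "ipoly ([:int d ^ p:] + smult (int p) (b ^ p * s)) z = 0" by simp
  then have "f dvd [:int d ^ p:] + smult (int p) (b ^ p * s)" by (rule f_dvd)
  moreover have "degree f > 0" using f(1,2) monic_degree_0[of f] by (auto simp: gr0I)
  ultimately have "int p dvd int d ^ p" using monic_dvd_const_plus_multiple f(2) by blast
  then have "p dvd d ^ p" by (simp flip: of_nat_power)
  then have "p dvd d" using p(1) prime_dvd_power by blast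
  with p(2) show False by contradiction
qed

lemma ipoly_root_of_unity_prime_power:
  fixes z :: complex and P :: "int poly"
  assumes d: "d > 0" "z ^ d = 1" and p: "prime p" "\<not> p dvd d" and P: "ipoly P z = 0"
  shows "ipoly P (z ^ p) = 0"
proof -
  have "ipoly (monom 1 d - 1) z = 0" using d(2) by simp
  then obtain f where f: "prime f" "monic f" "f dvd monom 1 d - 1" "ipoly f z = 0"
    using monic_prime_factor_vanishing[OF monic_monom_minus_one[OF d(1)]] by blast
  obtain t where "P = f * t" using prime_vanishing_dvd[OF f(1,2,4) P] ..
  then show ?thesis using prime_factor_vanishing_at_prime_power[OF d p f] by simp
qed

lemma ipoly_root_of_unity_coprime_power:
  fixes z :: complex and P :: "int poly"
  assumes "d > 0" "z ^ d = 1" "gcd k d = 1" "ipoly P z = 0"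
  shows "ipoly P (z ^ k) = 0"
  using assms(3)
proof (induction k rule: prime_divisors_induct)
  case zero
  then have "z = 1" using assms(2) by simp
  then show ?case using assms(4) by simp
next
  case (unit k)
  then show ?case using assms(4) by simp
next
  case (factor p k)
  have cop: "gcd p d = 1" "gcd k d = 1"
    using factor.prems coprime_mult_left_iff[of p k d] by (simp_all add: coprime_iff_gcd_eq_1)
  have "ipoly P (z ^ k) = 0" by (rule factor.IH[OF cop(2)])
  moreover have "\<not> p dvd d"
  proof
    assume "p dvd d"
    then have "p = 1" using cop(1) by (simp add: gcd_nat.absorb1)
    then show False using factor.hyps by simp
  qed
  ultimately have "ipoly P ((z ^ k) ^ p) = 0"
    using ipoly_root_of_unity_prime_power[OF assms(1) root_of_unity_power[OF assms(2)] factor.hyps]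
    by blast
  then show ?case by (simp add: power_mult mult.commute)
qed

lemma ipoly_root_of_unity_coprime_power_iff:
  fixes z :: complex and P :: "int poly"
  assumes "d > 0" "z ^ d = 1" "gcd k d = 1"
  shows "ipoly P (z ^ k) = 0 \<longleftrightarrow> ipoly P z = 0"
proof
  assume "ipoly P (z ^ k) = 0"
  obtain u where u: "[u * k = 1] (mod d)"
    using cong_solve_nat[of k d] unfolding assms(3) mult.commute[of k] by blast
  have "gcd u d = 1"
    using coprime_iff_invertible_nat[of u d] u by (auto simp: coprime_iff_gcd_eq_1)
  from ipoly_root_of_unity_coprime_power[OF assms(1) root_of_unity_power[OF assms(2)] this
      \<open>ipoly P (z ^ k) = 0\<close>]
  have "ipoly P ((z ^ k) ^ u) = 0" .
  moreover have "(z ^ k) ^ u = z"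
    using root_of_unity_power_cong[OF assms(2) u] by (simp add: power_mult mult.commute)
  ultimately show "ipoly P z = 0" by simp
next
  assume "ipoly P z = 0"
  then show "ipoly P (z ^ k) = 0" by (rule ipoly_root_of_unity_coprime_power[OF assms])
qed

section \<open>Primitive idempotents of the dicyclic group\<close>

definition coset_exponents :: "dic set \<Rightarrow> bool \<Rightarrow> int set" where
  "coset_exponents C b = {k. (b, k) \<in> C}"

definition exponent_poly :: "int set \<Rightarrow> int poly" where
  "exponent_poly S = (\<Sum>k\<in>S. monom 1 (nat k))"

lemma dic_elems_eq: "dic_elems n = UNIV \<times> {0..<2 * int n}"
  unfolding dic_elems_def by auto

lemma finite_dic_elems: "finite (dic_elems n)"
  unfolding dic_elems_eq by simp

lemma card_dic_elems: "card (dic_elems n) = 4 * n"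
  unfolding dic_elems_eq by (simp add: card_cartesian_product)

lemma idem_apply_subset:
  assumes "C \<subseteq> dic_elems n"
  shows "idem_apply n \<chi> C g = (\<Sum>h\<in>C. dic_idem n \<chi> g h)"
proof -
  have "idem_apply n \<chi> C g = (\<Sum>h\<in>dic_elems n. if h \<in> C then dic_idem n \<chi> g h else 0)"
    unfolding idem_apply_def by (rule sum.cong) simp_all
  also have "\<dots> = (\<Sum>h\<in>C. dic_idem n \<chi> g h)"
    using assms by (simp add: sum.inter_restrict[OF finite_dic_elems, symmetric] Int_absorb1)
  finally show ?thesis .
qed

lemma sum_dic_subset:
  assumes "C \<subseteq> dic_elems n"
  shows "(\<Sum>h\<in>C. F h) = (\<Sum>b\<in>UNIV. \<Sum>k\<in>coset_exponents C b. F (b, k))"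
proof -
  have "finite (coset_exponents C b)" for b
  proof (rule finite_subset)
    show "coset_exponents C b \<subseteq> {0..<2 * int n}"
      using assms unfolding coset_exponents_def dic_elems_eq by auto
  qed simp
  then have "(\<Sum>b\<in>UNIV. \<Sum>k\<in>coset_exponents C b. F (b, k))
      = (\<Sum>(b, k)\<in>Sigma UNIV (coset_exponents C). F (b, k))"
    by (intro sum.Sigma) simp_all
  also have "Sigma UNIV (coset_exponents C) = C" unfolding coset_exponents_def by auto
  finally show ?thesis by simp
qed

lemma annihilates_Chi3_iff: "annihilates n Chi3 C \<longleftrightarrow> annihilates n Chi2 C"
proof -
  have conj: "dic_char n Chi3 h = cnj (dic_char n Chi2 h)" for h by (cases h) simp
  have "idem_apply n Chi3 C g = cnj (idem_apply n Chi2 C g)" for g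
    unfolding idem_apply_def dic_idem_def cnj_sum by (rule sum.cong) (simp_all add: conj)
  then show ?thesis unfolding annihilates_def by simp
qed

lemma cos_pi_mult_mod:
  fixes r n :: nat
  assumes "n > 0"
  shows "cos (pi * r * of_int (t mod (2 * int n)) / n) = cos (pi * r * of_int t / n)"
proof -
  define q where "q = t div (2 * int n)"
  define m where "m = int r * q"
  have "real_of_int t = of_int (t mod (2 * int n) + 2 * int n * q)"
    unfolding q_def by (simp only: mod_mult_div_eq)
  then have "pi * r * of_int t / n = pi * r * of_int (t mod (2 * int n)) / n + 2 * pi * of_int m"
    using assms unfolding m_def by (simp add: field_simps)
  then show ?thesis by (simp add: cos_add)
qed

lemma dic_char_Psi_shift:
  assumes "n > 0"
  shows "dic_char n (Psi r) (dic_mult n (dic_inv n (b, a)) (c, j))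
    = (if b = c then of_real (2 * cos (pi * r * of_int (j - a) / n)) else 0)"
proof -
  have "((- a) mod (2 * int n) + j) mod (2 * int n) = (j - a) mod (2 * int n)"
    by (simp add: mod_add_left_eq)
  moreover have "(int n + j - (a + int n) mod (2 * int n)) mod (2 * int n) = (j - a) mod (2 * int n)"
    by (simp add: mod_diff_right_eq)
  ultimately show ?thesis using cos_pi_mult_mod[OF assms, of r "j - a"] by (cases b; cases c) simp_all
qed

lemma idem_apply_Psi:
  assumes "n > 0" "C \<subseteq> dic_elems n"
  shows "idem_apply n (Psi r) C (b, a)
    = of_real ((\<Sum>j\<in>coset_exponents C b. cos (pi * r * of_int (j - a) / n)) / n)"
proof -
  have "dic_idem n (Psi r) (b, a) (c, j)
      = (if b = c then of_real (cos (pi * r * of_int (j - a) / n) / n) else 0)" for c j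
    using assms(1) by (simp add: dic_idem_def dic_char_Psi_shift card_dic_elems)
  then have "idem_apply n (Psi r) C (b, a)
      = (\<Sum>c\<in>UNIV. \<Sum>j\<in>coset_exponents C c.
          if b = c then of_real (cos (pi * r * of_int (j - a) / n) / n) else 0)"
    using assms(2) by (simp add: idem_apply_subset sum_dic_subset)
  also have "\<dots> = (\<Sum>j\<in>coset_exponents C b. of_real (cos (pi * r * of_int (j - a) / n) / n))"
    by (cases b) (simp_all add: UNIV_bool)
  finally show ?thesis by (simp add: sum_divide_distrib)
qed

lemma cos_sum_eq_Re_cis:
  "(\<Sum>j\<in>S. cos (\<theta> * of_int (j - a))) = Re (cis (- \<theta> * of_int a) * (\<Sum>j\<in>S. cis (\<theta> * of_int j)))"
  by (simp add: sum_distrib_left Re_sum flip: cis_mult) (simp add: algebra_simps cos_diff)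

lemma cos_sums_vanish_iff:
  assumes "sin \<theta> \<noteq> 0" "0 \<in> A" "1 \<in> A"
  shows "(\<forall>a\<in>A. (\<Sum>j\<in>S. cos (\<theta> * of_int (j - a))) = 0) \<longleftrightarrow> (\<Sum>j\<in>S. cis (\<theta> * of_int j)) = 0"
    (is "?cos \<longleftrightarrow> ?Z = 0")
proof
  assume ?cos
  then have "(\<Sum>j\<in>S. cos (\<theta> * of_int (j - 0))) = 0" "(\<Sum>j\<in>S. cos (\<theta> * of_int (j - 1))) = 0"
    using assms(2,3) by blast+
  then have "Re ?Z = 0" and "Re (cis (- \<theta>) * ?Z) = 0"
    unfolding cos_sum_eq_Re_cis by simp_all
  then have "Re ?Z = 0" and "sin \<theta> * Im ?Z = 0" by (simp_all add: cis.code)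
  then show "?Z = 0" using assms(1) by (simp add: complex_eq_iff)
next
  assume "?Z = 0"
  then show ?cos unfolding cos_sum_eq_Re_cis by simp
qed

lemma ipoly_exponent_poly_cis:
  assumes "\<forall>k\<in>S. 0 \<le> k"
  shows "ipoly (exponent_poly S) (cis \<theta>) = (\<Sum>k\<in>S. cis (\<theta> * of_int k))"
proof -
  have "ipoly (exponent_poly S) (cis \<theta>) = (\<Sum>k\<in>S. cis \<theta> ^ nat k)"
    unfolding exponent_poly_def by simp
  also have "\<dots> = (\<Sum>k\<in>S. cis (\<theta> * of_int k))"
    using assms by (intro sum.cong) (simp_all add: DeMoivre of_nat_nat mult.commute)
  finally show ?thesis .
qed

lemma Psi_annihilates_iff:
  assumes "n > 0" "C \<subseteq> dic_elems n" "0 < r" "r < n"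
  shows "annihilates n (Psi r) C
    \<longleftrightarrow> (\<forall>b. ipoly (exponent_poly (coset_exponents C b)) (cis (pi / n) ^ r) = 0)"
proof -
  define \<theta> where "\<theta> = pi * r / n"
  have "0 < \<theta>" "\<theta> < pi" using assms(1,3,4) unfolding \<theta>_def by (simp_all add: divide_less_eq)
  then have "sin \<theta> \<noteq> 0" using sin_gt_zero by fastforce
  have pointwise: "idem_apply n (Psi r) C (b, a) = 0
      \<longleftrightarrow> (\<Sum>j\<in>coset_exponents C b. cos (\<theta> * of_int (j - a))) = 0" for b a
  proof -
    have "pi * r * of_int (j - a) / n = \<theta> * of_int (j - a)" for j
      unfolding \<theta>_def by simp
    then show ?thesis using assms(1) by (simp only: idem_apply_Psi[OF assms(1,2)]) (simp del: of_real_sum)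
  qed
  have "annihilates n (Psi r) C
      \<longleftrightarrow> (\<forall>b. \<forall>a\<in>{0..<2 * int n}. idem_apply n (Psi r) C (b, a) = 0)"
    unfolding annihilates_def dic_elems_eq by blast
  also have "\<dots> \<longleftrightarrow> (\<forall>b. \<forall>a\<in>{0..<2 * int n}.
      (\<Sum>j\<in>coset_exponents C b. cos (\<theta> * of_int (j - a))) = 0)"
    by (simp only: pointwise)
  also have "\<dots> \<longleftrightarrow> (\<forall>b. (\<Sum>j\<in>coset_exponents C b. cis (\<theta> * of_int j)) = 0)"
    using cos_sums_vanish_iff[OF \<open>sin \<theta> \<noteq> 0\<close>, of "{0..<2 * int n}"] assms(1) by simp
  also have "\<dots> \<longleftrightarrow> (\<forall>b. ipoly (exponent_poly (coset_exponents C b)) (cis (pi / n) ^ r) = 0)"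
  proof -
    have "\<forall>k\<in>coset_exponents C b. 0 \<le> k" for b
      using assms(2) unfolding coset_exponents_def dic_elems_def by auto
    moreover have "cis (pi / n) ^ r = cis \<theta>" unfolding \<theta>_def DeMoivre by (simp add: mult.commute)
    ultimately show ?thesis by (simp add: ipoly_exponent_poly_cis)
  qed
  finally show ?thesis .
qed

lemma Psi_mem_T_of_iff: "0 < r \<Longrightarrow> r < n \<Longrightarrow> Psi r \<in> T_of n C \<longleftrightarrow> annihilates n (Psi r) C"
  by (auto simp: T_of_def dic_irr_def)

lemma Psi_mem_T_of_Galois_iff:
  assumes n: "n > 0" and C: "C \<subseteq> dic_elems n"
    and l: "0 < l" "l < n" and m: "0 < m" "m < n"
    and k: "gcd k (2 * int n) = 1" and m_cong: "[int m = k * int l] (mod 2 * int n)"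
  shows "Psi m \<in> T_of n C \<longleftrightarrow> Psi l \<in> T_of n C"
proof -
  define \<zeta> where "\<zeta> = cis (pi / n)"
  have \<zeta>: "\<zeta> ^ (2 * n) = 1" unfolding \<zeta>_def DeMoivre using n by simp
  define k' where "k' = nat (k mod (2 * int n))"
  have k'_eq: "int k' = k mod (2 * int n)" using n unfolding k'_def by simp
  have "gcd (int k') (int (2 * n)) = 1"
    using k n unfolding k'_eq by (simp add: coprime_iff_gcd_eq_1 [symmetric])
  then have k'_unit: "gcd k' (2 * n) = 1" by (simp only: gcd_int_int_eq)
  have "[int m = int (k' * l)] (mod int (2 * n))"
    using m_cong unfolding of_nat_mult k'_eq by (simp add: cong_def mod_mult_left_eq)
  then have "[m = k' * l] (mod 2 * n)" by (simp only: cong_int_iff)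
  from root_of_unity_power_cong[OF \<zeta> this] have "\<zeta> ^ m = (\<zeta> ^ l) ^ k'"
    by (simp add: power_mult [symmetric] mult.commute)
  then show ?thesis
    using ipoly_root_of_unity_coprime_power_iff[OF _ root_of_unity_power[OF \<zeta>] k'_unit] n
    by (simp add: Psi_mem_T_of_iff l m Psi_annihilates_iff[OF n C] \<zeta>_def)
qed

section \<open>Centred residues\<close>

(* Here cmod is the centred residue of Defs, which shadows the complex modulus of Complex_Main. *)
lemma cmod_cong_bounds:
  assumes "m > 0"
  shows "[cmod k m = k] (mod m) \<and> - m < 2 * cmod k m \<and> 2 * cmod k m \<le> m"
proof -
  define c where "c = (if 2 * (k mod m) \<le> m then k mod m else k mod m - m)"
  have c: "c mod m = k mod m \<and> - m < 2 * c \<and> 2 * c \<le> m"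
    using assms pos_mod_bound[OF assms, of k] pos_mod_sign[OF assms, of k]
    unfolding c_def by (auto simp: mod_diff_left_eq [symmetric])
  have "cmod k m = c" unfolding cmod_def
  proof (rule the_equality)
    fix c' assume c': "c' mod m = k mod m \<and> - m < 2 * c' \<and> 2 * c' \<le> m"
    then have "m dvd c' - c" using c by (simp add: mod_eq_dvd_iff [symmetric])
    show "c' = c"
    proof (rule ccontr)
      assume "c' \<noteq> c"
      then have "\<bar>m\<bar> \<le> \<bar>c' - c\<bar>" using dvd_imp_le_int \<open>m dvd c' - c\<close> by simp
      then show False using c c' by linarith
    qed
  qed (rule c)
  then show ?thesis using c by (simp add: cong_def)
qed

lemma abs_cmod_cong:
  assumes "m > 0"
  shows "[\<bar>cmod k m\<bar> = k] (mod m) \<or> [\<bar>cmod k m\<bar> = - k] (mod m)"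
  using cmod_cong_bounds[OF assms, of k] cong_minus_minus_iff[of "cmod k m" k m]
  by (cases "cmod k m \<ge> 0") auto

lemma abs_cmod_coprime_range:
  assumes l: "0 < l" "l < n" and k: "gcd k (2 * int n) = 1"
  shows "0 < \<bar>cmod (k * int l) (2 * int n)\<bar> \<and> \<bar>cmod (k * int l) (2 * int n)\<bar> < int n"
proof -
  let ?c = "cmod (k * int l) (2 * int n)"
  have c: "[?c = k * int l] (mod 2 * int n)" "- 2 * int n < 2 * ?c" "2 * ?c \<le> 2 * int n"
    using cmod_cong_bounds[of "2 * int n" "k * int l"] l by auto
  have "\<not> int n dvd int l" using l dvd_imp_le[of n l] by auto
  then have not_dvd: "\<not> m dvd k * int l" if "int n dvd m" "gcd k m = 1" for m
    using that by (metis coprime_dvd_mult_right_iff coprime_iff_gcd_eq_1 dvd_trans gcd.commute)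
  have "?c \<noteq> 0"
  proof
    assume "?c = 0"
    then have "2 * int n dvd k * int l" using c(1) by (simp add: cong_def dvd_eq_mod_eq_0)
    then show False using not_dvd[of "2 * int n"] k by simp
  qed
  moreover have "?c \<noteq> int n"
  proof
    assume "?c = int n"
    then have "int n dvd k * int l - int n" using c(1)
      by (metis cong_iff_dvd_diff cong_sym dvd_mult_right)
    then have "int n dvd k * int l" using dvd_add[OF _ dvd_refl[of "int n"]] by fastforce
    moreover have "gcd k (int n) = 1"
      using k by (metis coprime_iff_gcd_eq_1 coprime_mult_right_iff)
    ultimately show False using not_dvd[of "int n"] by simp
  qed
  ultimately show ?thesis using c(2,3) by auto
qed

theorem corollary6p1:
  fixes n :: nat and C :: "dic set"
  assumes "odd n" and "n > 0"
    and "C \<subseteq> dic_elems n" and "C \<noteq> {}"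
    and "delsarte_design n (T_of n C) C"
  shows "(Chi2 \<in> T_of n C \<longleftrightarrow> Chi3 \<in> T_of n C)
    \<and> (\<forall>l k. 1 \<le> l \<and> l \<le> n - 1 \<and> - int n < k \<and> k < int n \<and> gcd k (2 * int n) = 1
          \<longrightarrow> (Psi l \<in> T_of n C \<longleftrightarrow> Psi (nat \<bar>cmod (k * int l) (2 * int n)\<bar>) \<in> T_of n C))"
proof (intro conjI allI impI)
  show "Chi2 \<in> T_of n C \<longleftrightarrow> Chi3 \<in> T_of n C"
    using annihilates_Chi3_iff by (auto simp: T_of_def dic_irr_def)
next
  fix l :: nat and k :: int
  assume lk: "1 \<le> l \<and> l \<le> n - 1 \<and> - int n < k \<and> k < int n \<and> gcd k (2 * int n) = 1"
  let ?m = "nat \<bar>cmod (k * int l) (2 * int n)\<bar>"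
  have l: "0 < l" "l < n" using lk assms(2) by auto
  have k: "gcd k (2 * int n) = 1" "gcd (- k) (2 * int n) = 1" using lk by simp_all
  have m: "0 < ?m" "?m < n" using abs_cmod_coprime_range[OF l k(1)] by auto
  consider "[int ?m = k * int l] (mod 2 * int n)" | "[int ?m = - k * int l] (mod 2 * int n)"
    using abs_cmod_cong[of "2 * int n" "k * int l"] assms(2) by auto
  then show "Psi l \<in> T_of n C \<longleftrightarrow> Psi ?m \<in> T_of n C"
    using Psi_mem_T_of_Galois_iff[OF assms(2,3) l m k(1)]
      Psi_mem_T_of_Galois_iff[OF assms(2,3) l m k(2)]
    by cases simp_all
qed

end
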